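(* Let $\mathfrak G$ be a Grassmann semialgebra over a commutative semiring $\mathcal A$ and an $\mathcal A$-module $V$. Then for all $v_1,v_2\in V$, $$(v_1+v_2)^2\succeq_\circ v_1^2+v_2^2 .$$
   Context: A Grassmann (exterior) semialgebra over $\mathcal A$ and $V$ is an associative $\mathcal A$-semialgebra $\mathfrak G$ (product written $\wedge$, with $x^2=x\wedge x$) generated by $\mathcal A$ and $V$; $\mathfrak G_k$ is the submodule generated by products of $k$ elements of $V$ and $\mathfrak G_{\ge2}=\sum_{k\ge2}\mathfrak G_k$; it is equipped with a negation map $(-)$ on $\mathfrak G_{\ge2}$ (an additive bijection of order $\le2$ commuting with scalars) such that $v_1\wedge v_2=(-)(v_2\wedge v_1)$ for all $v_1,v_2\in V$. A quasi-zero is an element $a+((-)a)$; $\mathfrak G^\circ$ is the set of quasi-zeros. The relation $a_0\preceq_\circ a_1$ (also written $a_1\succeq_\circ a_0$) means $a_1=a_0+d$ for some $d\in\mathfrak G^\circ$. *)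

theory Defs
  imports Main
begin

inductive_set aspan :: "('a \<Rightarrow> 'g \<Rightarrow> 'g) \<Rightarrow> 'g::comm_monoid_add set \<Rightarrow> 'g set"
  for smult :: "'a \<Rightarrow> 'g \<Rightarrow> 'g" and S :: "'g set" where
  aspan_zero: "0 \<in> aspan smult S"
| aspan_base: "s \<in> S \<Longrightarrow> s \<in> aspan smult S"
| aspan_add: "x \<in> aspan smult S \<Longrightarrow> y \<in> aspan smult S \<Longrightarrow> x + y \<in> aspan smult S"
| aspan_smult: "x \<in> aspan smult S \<Longrightarrow> smult a x \<in> aspan smult S"

inductive_set gen_alg :: "('a::comm_semiring_1 \<Rightarrow> 'g \<Rightarrow> 'g) \<Rightarrow> 'g::{semiring_0,monoid_mult} set \<Rightarrow> 'g set"
  for smult :: "'a \<Rightarrow> 'g \<Rightarrow> 'g" and V :: "'g set" where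
  gen_scalar: "smult a 1 \<in> gen_alg smult V"
| gen_V: "v \<in> V \<Longrightarrow> v \<in> gen_alg smult V"
| gen_add: "x \<in> gen_alg smult V \<Longrightarrow> y \<in> gen_alg smult V \<Longrightarrow> x + y \<in> gen_alg smult V"
| gen_mult: "x \<in> gen_alg smult V \<Longrightarrow> y \<in> gen_alg smult V \<Longrightarrow> x * y \<in> gen_alg smult V"
| gen_smult: "x \<in> gen_alg smult V \<Longrightarrow> smult a x \<in> gen_alg smult V"

definition Gk :: "('a \<Rightarrow> 'g \<Rightarrow> 'g) \<Rightarrow> 'g::{semiring_0,monoid_mult} set \<Rightarrow> nat \<Rightarrow> 'g set" where
  "Gk smult V k = aspan smult {foldr (*) xs 1 | xs. length xs = k \<and> set xs \<subseteq> V}"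

definition Gge2 :: "('a \<Rightarrow> 'g \<Rightarrow> 'g) \<Rightarrow> 'g::{semiring_0,monoid_mult} set \<Rightarrow> 'g set" where
  "Gge2 smult V = aspan smult (\<Union>k\<in>{2..}. Gk smult V k)"

locale grassmann_semialgebra =
  fixes smult :: "'a::comm_semiring_1 \<Rightarrow> 'g::{semiring_0,monoid_mult} \<Rightarrow> 'g"
    and V :: "'g set"
    and neg :: "'g \<Rightarrow> 'g"
  assumes smult_assoc: "smult (a * b) x = smult a (smult b x)"
    and smult_one: "smult 1 x = x"
    and smult_zero_left: "smult 0 x = 0"
    and smult_zero_right: "smult a 0 = 0"
    and smult_add_left: "smult (a + b) x = smult a x + smult b x"
    and smult_add_right: "smult a (x + y) = smult a x + smult a y"
    and smult_mult_left: "smult a (x * y) = smult a x * y"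
    and smult_mult_right: "smult a (x * y) = x * smult a y"
    and V_zero: "0 \<in> V"
    and V_add: "\<lbrakk>v \<in> V; w \<in> V\<rbrakk> \<Longrightarrow> v + w \<in> V"
    and V_smult: "v \<in> V \<Longrightarrow> smult a v \<in> V"
    and generated: "gen_alg smult V = UNIV"
    and neg_bij: "bij_betw neg (Gge2 smult V) (Gge2 smult V)"
    and neg_add: "\<lbrakk>x \<in> Gge2 smult V; y \<in> Gge2 smult V\<rbrakk> \<Longrightarrow> neg (x + y) = neg x + neg y"
    and neg_involutive: "x \<in> Gge2 smult V \<Longrightarrow> neg (neg x) = x"
    and neg_smult: "x \<in> Gge2 smult V \<Longrightarrow> neg (smult a x) = smult a (neg x)"
    and neg_swap: "\<lbrakk>v1 \<in> V; v2 \<in> V\<rbrakk> \<Longrightarrow> v1 * v2 = neg (v2 * v1)"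

text \<open>Quasi-zeros a + (-)a, a in G_{>=2} (where the negation map is defined).\<close>
definition quasi_zeros :: "('a \<Rightarrow> 'g \<Rightarrow> 'g) \<Rightarrow> 'g::{semiring_0,monoid_mult} set \<Rightarrow> ('g \<Rightarrow> 'g) \<Rightarrow> 'g set" where
  "quasi_zeros smult V neg = {a + neg a | a. a \<in> Gge2 smult V}"

definition preceq_circ :: "('a \<Rightarrow> 'g \<Rightarrow> 'g) \<Rightarrow> 'g::{semiring_0,monoid_mult} set \<Rightarrow> ('g \<Rightarrow> 'g) \<Rightarrow> 'g \<Rightarrow> 'g \<Rightarrow> bool" where
  "preceq_circ smult V neg a0 a1 \<longleftrightarrow> (\<exists>d \<in> quasi_zeros smult V neg. a1 = a0 + d)"

end

theory Submission
  imports Defs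
begin

(* Expanding the square gives v1^2 + v2^2 plus the cross terms v2 v1 + v1 v2; by the
   anticommutation rule the second cross term is the negation of the first, so the cross
   terms form a quasi-zero. *)

lemma square_of_sum_eq:
  fixes x y :: "'g::semiring_0"
  shows "(x + y) * (x + y) = (x * x + y * y) + (y * x + x * y)"
  by (simp add: distrib_left distrib_right ac_simps)

context grassmann_semialgebra
begin

lemma mult_V_in_Gk2:
  assumes "v \<in> V" and "w \<in> V"
  shows "v * w \<in> Gk smult V 2"
proof -
  have "v * w \<in> {foldr (*) xs 1 | xs. length xs = 2 \<and> set xs \<subseteq> V}"
    using assms by (intro CollectI exI[of _ "[v, w]"]) simp
  then show ?thesis
    unfolding Gk_def by (rule aspan.aspan_base)
qed

lemma Gk_subset_Gge2:
  assumes "2 \<le> k"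
  shows "Gk smult V k \<subseteq> Gge2 smult V"
  unfolding Gge2_def using assms by (auto intro: aspan.aspan_base)

lemma mult_V_in_Gge2:
  assumes "v \<in> V" and "w \<in> V"
  shows "v * w \<in> Gge2 smult V"
  using mult_V_in_Gk2[OF assms] Gk_subset_Gge2[of 2] by blast

lemma add_neg_in_quasi_zeros:
  assumes "x \<in> Gge2 smult V"
  shows "x + neg x \<in> quasi_zeros smult V neg"
  unfolding quasi_zeros_def using assms by blast

lemma preceq_circ_add_quasi_zero:
  assumes "d \<in> quasi_zeros smult V neg"
  shows "preceq_circ smult V neg a (a + d)"
  unfolding preceq_circ_def using assms by blast

lemma anticommutator_in_quasi_zeros:
  assumes "v \<in> V" and "w \<in> V"
  shows "w * v + v * w \<in> quasi_zeros smult V neg"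
  using add_neg_in_quasi_zeros[OF mult_V_in_Gge2[OF assms(2,1)]] neg_swap[OF assms]
  by simp

end

theorem proposition2p23:
  fixes smult :: "'a::comm_semiring_1 \<Rightarrow> 'g::{semiring_0,monoid_mult} \<Rightarrow> 'g"
    and V :: "'g set" and neg :: "'g \<Rightarrow> 'g"
  assumes "grassmann_semialgebra smult V neg"
    and "v1 \<in> V" and "v2 \<in> V"
  shows "preceq_circ smult V neg (v1 * v1 + v2 * v2) ((v1 + v2) * (v1 + v2))"
proof -
  interpret grassmann_semialgebra smult V neg by fact
  have "v2 * v1 + v1 * v2 \<in> quasi_zeros smult V neg"
    using anticommutator_in_quasi_zeros[OF assms(2,3)] .
  then show ?thesis
    unfolding square_of_sum_eq by (rule preceq_circ_add_quasi_zero)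
qed

end
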